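(* Let $I=(G,T,k)$, $G=(V,E)$, be a Node Multiway Cut instance satisfying: (R1) no two terminals are adjacent and $p(I)\ge 0$; (R2) no vertex of $V\setminus T$ is adjacent to two distinct terminals; (R3) for every terminal $t$ and every neighbour $w\in V\setminus T$ of $t$, the optimum of the LP-relaxation of $I$ with the additional constraint $d_w=0$ is strictly larger than $LP(I)$; (R5) every connected component of $G$ contains at least two terminals. Then $|T|\le 2k$.
   Context: A Node Multiway Cut instance $I=(G,T,k)$ consists of a simple undirected graph $G=(V,E)$, a set $T\subseteq V$ of terminals and an integer $k$; it is a YES-instance iff there is a set $X\subseteq V\setminus T$ with $|X|\le k$ such that every path in $G$ between two distinct terminals contains a vertex of $X$. Let $\mathcal P(I)$ be the set of all simple paths in $G$ connecting two distinct terminals. The LP-relaxation of $I$ is: minimize $\sum_{v\in V\setminus T} d_v$ subject to $\sum_{v\in V(P)\setminus T} d_v\ge 1$ for every $P\in\mathcal P(I)$ and $d_v\ge 0$ for all $v\in V\setminus T$. $LP(I)$ denotes its optimum value and $p(I)=k-LP(I)$. *)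

theory Defs
  imports Main "HOL-Library.Extended_Real"
begin

definition simple_graph :: "'a set \<Rightarrow> ('a \<Rightarrow> 'a \<Rightarrow> bool) \<Rightarrow> bool" where
  "simple_graph V E \<longleftrightarrow> finite V \<and> (\<forall>u v. E u v \<longrightarrow> u \<in> V \<and> v \<in> V)
     \<and> (\<forall>u v. E u v \<longrightarrow> E v u) \<and> (\<forall>v. \<not> E v v)"

definition is_path :: "'a set \<Rightarrow> ('a \<Rightarrow> 'a \<Rightarrow> bool) \<Rightarrow> 'a list \<Rightarrow> bool" where
  "is_path V E P \<longleftrightarrow> P \<noteq> [] \<and> distinct P \<and> set P \<subseteq> V
     \<and> (\<forall>i < length P - 1. E (P ! i) (P ! Suc i))"

definition terminal_paths :: "'a set \<Rightarrow> ('a \<Rightarrow> 'a \<Rightarrow> bool) \<Rightarrow> 'a set \<Rightarrow> 'a list set" where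
  "terminal_paths V E T = {P. is_path V E P \<and> hd P \<in> T \<and> last P \<in> T \<and> hd P \<noteq> last P}"

text \<open>Feasible solutions of the LP relaxation (only values on V - T matter).\<close>
definition lp_feasible :: "'a set \<Rightarrow> ('a \<Rightarrow> 'a \<Rightarrow> bool) \<Rightarrow> 'a set \<Rightarrow> ('a \<Rightarrow> real) \<Rightarrow> bool" where
  "lp_feasible V E T d \<longleftrightarrow> (\<forall>v \<in> V - T. d v \<ge> 0)
     \<and> (\<forall>P \<in> terminal_paths V E T. (\<Sum>v \<in> set P - T. d v) \<ge> 1)"

text \<open>Optimum of the LP relaxation (as extended real; +\<infinity> if infeasible).\<close>
definition LP :: "'a set \<Rightarrow> ('a \<Rightarrow> 'a \<Rightarrow> bool) \<Rightarrow> 'a set \<Rightarrow> ereal" where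
  "LP V E T = Inf {ereal (\<Sum>v \<in> V - T. d v) | d. lp_feasible V E T d}"

definition LP_fix0 :: "'a set \<Rightarrow> ('a \<Rightarrow> 'a \<Rightarrow> bool) \<Rightarrow> 'a set \<Rightarrow> 'a \<Rightarrow> ereal" where
  "LP_fix0 V E T w = Inf {ereal (\<Sum>v \<in> V - T. d v) | d. lp_feasible V E T d \<and> d w = 0}"

end

theory Submission
  imports Defs
begin

(*
  Let N be the set of non-terminals adjacent to a terminal.  By (R5) every terminal has a
  neighbour, which lies in N by (R1), and by (R2) distinct terminals have distinct
  neighbours; hence |T| <= |N|.  The heart of the proof is the bound |N| <= 2 LP(I), which
  together with p(I) >= 0 gives |T| <= 2k.

  For that bound take a nearly optimal LP solution d.  Moving the weight of a vertex w in N
  onto its neighbours yields a feasible solution with d_w = 0 (this uses (R2)), so by (R3)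
  d_w is bounded below by a fixed eta > 0.  A terminal path through three vertices of N can
  be short-cut through a terminal adjacent to its middle N-vertex, avoiding one of the other
  two; hence such a path has weight at least 1 + eta.  Consequently lowering d by a tiny
  epsilon on N and rescaling by 1/(1 - 2 epsilon) stays feasible, and comparing its cost
  with LP(I) forces |N| <= 2 LP(I).
*)

section \<open>Paths and walks\<close>

text \<open>Paths in terms of the library predicate \<open>successively\<close>, which suits list surgery.\<close>
lemma is_path_successively:
  "is_path V E P \<longleftrightarrow> P \<noteq> [] \<and> distinct P \<and> set P \<subseteq> V \<and> successively E P"
  unfolding is_path_def successively_conv_nth by (auto simp: less_diff_conv)

lemma mem_terminal_paths:
  "P \<in> terminal_paths V E T \<longleftrightarrow>
     P \<noteq> [] \<and> distinct P \<and> set P \<subseteq> V \<and> successively E P \<and> hd P \<in> T \<and> last P \<in> T \<and> hd P \<noteq> last P"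
  unfolding terminal_paths_def is_path_successively by auto

lemma walk_to_path:
  assumes "successively E xs" "xs \<noteq> []"
  shows "\<exists>ys. successively E ys \<and> distinct ys \<and> ys \<noteq> [] \<and> hd ys = hd xs \<and> last ys = last xs
              \<and> set ys \<subseteq> set xs"
  using assms
proof (induction xs)
  case Nil then show ?case by simp
next
  case (Cons x xs)
  show ?case
  proof (cases "xs = []")
    case True then show ?thesis by (intro exI[of _ "[x]"]) auto
  next
    case False
    with Cons.prems have e: "E x (hd xs)" and s: "successively E xs"
      by (auto simp: successively_Cons)
    from Cons.IH[OF s False] obtain ys where ys: "successively E ys" "distinct ys" "ys \<noteq> []"
      "hd ys = hd xs" "last ys = last xs" "set ys \<subseteq> set xs" by blast
    show ?thesis
    proof (cases "x \<in> set ys")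
      case False
      then show ?thesis using ys e \<open>xs \<noteq> []\<close>
        by (intro exI[of _ "x # ys"]) (auto simp: successively_Cons)
    next
      case True
      then obtain as bs where "ys = as @ x # bs" by (meson split_list)
      then show ?thesis using ys \<open>xs \<noteq> []\<close>
        by (intro exI[of _ "x # bs"]) (auto simp: successively_append_iff)
    qed
  qed
qed

lemma walk_terminal_path:
  assumes "successively E xs" "xs \<noteq> []" "set xs \<subseteq> V" "hd xs \<in> T" "last xs \<in> T" "hd xs \<noteq> last xs"
  shows "\<exists>Q \<in> terminal_paths V E T. set Q \<subseteq> set xs"
proof -
  obtain ys where "successively E ys" "distinct ys" "ys \<noteq> []" "hd ys = hd xs" "last ys = last xs"
    "set ys \<subseteq> set xs" using walk_to_path[OF assms(1,2)] by blast
  then have "ys \<in> terminal_paths V E T" using assms by (auto simp: mem_terminal_paths)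
  then show ?thesis using \<open>set ys \<subseteq> set xs\<close> by blast
qed

text \<open>An inner vertex of a terminal path that sees at most one terminal has a
  non-terminal neighbour on the path (its two path neighbours cannot both be terminals).\<close>
lemma path_nonterminal_neighbour:
  assumes G: "simple_graph V E" and P: "P \<in> terminal_paths V E T"
    and w: "w \<in> set P" "w \<notin> T"
    and one_terminal: "\<forall>s \<in> T. \<forall>t \<in> T. E w s \<and> E w t \<longrightarrow> s = t"
  shows "\<exists>x \<in> set P - T. x \<noteq> w \<and> E w x"
proof -
  have symE: "\<And>u v. E u v \<Longrightarrow> E v u" and irr: "\<And>v. \<not> E v v"
    using G by (auto simp: simple_graph_def)
  have tp: "distinct P" "successively E P" "hd P \<in> T" "last P \<in> T"
    using P by (auto simp: mem_terminal_paths)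
  obtain as bs where P_eq: "P = as @ w # bs" using w(1) by (meson split_list)
  have ne: "as \<noteq> []" "bs \<noteq> []" using tp w P_eq by auto
  then have e1: "E w (last as)" and e2: "E w (hd bs)"
    using tp(2) symE unfolding P_eq by (auto simp: successively_append_iff successively_Cons)
  have "last as \<in> set as" "hd bs \<in> set bs" using ne by auto
  then have "last as \<noteq> hd bs" using tp(1) unfolding P_eq by auto
  then have "last as \<notin> T \<or> hd bs \<notin> T" using one_terminal e1 e2 by blast
  moreover have "last as \<in> set P" "hd bs \<in> set P" using ne P_eq by auto
  ultimately show ?thesis using e1 e2 irr by (metis DiffI)
qed

lemma middle_element:
  assumes "card (set xs \<inter> A) \<ge> 3"
  shows "\<exists>as x bs. xs = as @ x # bs \<and> x \<in> A \<and> (\<exists>y \<in> set as. y \<in> A) \<and> (\<exists>z \<in> set bs. z \<in> A)"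
proof -
  define F where "F = filter (\<lambda>v. v \<in> A) xs"
  have setF: "set F = set xs \<inter> A" unfolding F_def by auto
  have "\<not> set F \<subseteq> {hd F, last F}"
  proof
    assume "set F \<subseteq> {hd F, last F}"
    then have "card (set F) \<le> card {hd F, last F}" by (intro card_mono) auto
    also have "\<dots> \<le> 2" by (simp add: card_insert_if)
    finally show False using assms setF by simp
  qed
  then obtain x where x: "x \<in> set F" "x \<noteq> hd F" "x \<noteq> last F" by blast
  then obtain as bs where xs: "xs = as @ x # bs" unfolding F_def by (meson filter_is_subset split_list subsetD)
  have xA: "x \<in> A" using x setF by auto
  have F_eq: "F = filter (\<lambda>v. v \<in> A) as @ x # filter (\<lambda>v. v \<in> A) bs"
    unfolding F_def xs using xA by simp
  have "filter (\<lambda>v. v \<in> A) as \<noteq> []" using x(2) F_eq by auto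
  moreover have "filter (\<lambda>v. v \<in> A) bs \<noteq> []" using x(3) F_eq by auto
  ultimately show ?thesis using xs xA by (fastforce simp: filter_empty_conv)
qed

section \<open>The LP relaxation\<close>

definition lp_cost :: "'a set \<Rightarrow> 'a set \<Rightarrow> ('a \<Rightarrow> real) \<Rightarrow> real" where
  "lp_cost V T d = (\<Sum>v \<in> V - T. d v)"

lemma LP_le_cost: "lp_feasible V E T d \<Longrightarrow> LP V E T \<le> ereal (lp_cost V T d)"
  unfolding LP_def lp_cost_def by (rule Inf_lower) blast

lemma LP_fix0_le_cost: "lp_feasible V E T d \<Longrightarrow> d w = 0 \<Longrightarrow> LP_fix0 V E T w \<le> ereal (lp_cost V T d)"
  unfolding LP_fix0_def lp_cost_def by (rule Inf_lower) blast

lemma LP_nonneg: "LP V E T \<ge> 0"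
  unfolding LP_def by (rule Inf_greatest) (auto simp: lp_feasible_def intro!: sum_nonneg)

lemma LP_near_optimal:
  assumes "LP V E T < ereal c"
  obtains d where "lp_feasible V E T d" "lp_cost V T d < c"
  using assms unfolding LP_def lp_cost_def by (auto simp: Inf_less_iff)

lemma uniform_gap:
  assumes "finite A" "\<forall>x \<in> A. ereal c < f x"
  shows "\<exists>\<delta>>0. \<delta> \<le> 1 \<and> (\<forall>x \<in> A. ereal (c + \<delta>) \<le> f x)"
  using assms
proof (induction A rule: finite_induct)
  case empty then show ?case by (intro exI[of _ 1]) auto
next
  case (insert a A)
  then obtain \<delta> where \<delta>: "\<delta> > 0" "\<delta> \<le> 1" "\<forall>x \<in> A. ereal (c + \<delta>) \<le> f x" by auto
  from insert.prems obtain z where z: "ereal c < ereal z" "ereal z < f a"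
    using ereal_dense2 by (metis insertI1)
  have le_old: "ereal (c + min \<delta> (z - c)) \<le> ereal (c + \<delta>)" by simp
  have "ereal (c + min \<delta> (z - c)) \<le> ereal z" by simp
  then have le_new: "ereal (c + min \<delta> (z - c)) \<le> f a"
    using z(2) by (meson less_imp_le order_trans)
  show ?case using \<delta> z le_new order_trans[OF le_old]
    by (intro exI[of _ "min \<delta> (z - c)"]) auto
qed

section \<open>Shifting the weight of a vertex to its neighbours\<close>

definition shift_weight :: "('a \<Rightarrow> 'a \<Rightarrow> bool) \<Rightarrow> 'a \<Rightarrow> ('a \<Rightarrow> real) \<Rightarrow> 'a \<Rightarrow> real" where
  "shift_weight E w d = (\<lambda>v. if v = w then 0 else if E w v then d v + d w else d v)"

text \<open>If the non-terminal \<open>w\<close> sees at most one terminal, moving its weight to all its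
  neighbours keeps a solution feasible: every terminal path through \<open>w\<close> also passes a
  non-terminal neighbour of \<open>w\<close>.\<close>
lemma shift_weight_feasible:
  assumes G: "simple_graph V E" and d: "lp_feasible V E T d" and w: "w \<in> V - T"
    and one_terminal: "\<forall>s \<in> T. \<forall>t \<in> T. E w s \<and> E w t \<longrightarrow> s = t"
  shows "lp_feasible V E T (shift_weight E w d)"
  unfolding lp_feasible_def
proof (intro conjI ballI)
  have dpos: "\<And>v. v \<in> V - T \<Longrightarrow> 0 \<le> d v" using d by (auto simp: lp_feasible_def)
  then show "0 \<le> shift_weight E w d v" if "v \<in> V - T" for v
    using that w by (auto simp: shift_weight_def)
  fix P assume P: "P \<in> terminal_paths V E T"
  have dP: "1 \<le> (\<Sum>v \<in> set P - T. d v)" using d P by (auto simp: lp_feasible_def)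
  have PV: "set P \<subseteq> V" using P by (auto simp: mem_terminal_paths)
  show "1 \<le> (\<Sum>v \<in> set P - T. shift_weight E w d v)"
  proof (cases "w \<in> set P")
    case False
    have "(\<Sum>v \<in> set P - T. d v) \<le> (\<Sum>v \<in> set P - T. shift_weight E w d v)"
      by (rule sum_mono) (use False dpos w in \<open>auto simp: shift_weight_def\<close>)
    then show ?thesis using dP by linarith
  next
    case True
    then obtain x where x: "x \<in> set P - T" "x \<noteq> w" "E w x"
      using path_nonterminal_neighbour[OF G P _ _ one_terminal] w by blast
    text \<open>The weight of \<open>w\<close> reappears at \<open>x\<close>, so the path sum does not drop.\<close>
    define g where "g = (\<lambda>v. d v - (if v = w then d w else 0) + (if v = x then d w else 0))"
    have "(\<Sum>v \<in> set P - T. g v) = (\<Sum>v \<in> set P - T. d v)"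
      unfolding g_def using x True w by (simp add: sum.distrib sum_subtractf)
    moreover have "(\<Sum>v \<in> set P - T. g v) \<le> (\<Sum>v \<in> set P - T. shift_weight E w d v)"
      by (rule sum_mono) (use x w PV dpos in \<open>auto simp: shift_weight_def g_def\<close>)
    ultimately show ?thesis using dP by linarith
  qed
qed

text \<open>Each of the at most \<open>|V - T|\<close> neighbours receives the weight \<open>d w\<close>.\<close>
lemma shift_weight_cost:
  assumes "finite V" "w \<in> V - T" "\<forall>v \<in> V - T. 0 \<le> d v"
  shows "lp_cost V T (shift_weight E w d) \<le> lp_cost V T d + real (card (V - T)) * d w"
proof -
  have "lp_cost V T (shift_weight E w d) \<le> (\<Sum>v \<in> V - T. d v + d w)"
    unfolding lp_cost_def by (rule sum_mono) (use assms in \<open>auto simp: shift_weight_def\<close>)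
  also have "\<dots> = lp_cost V T d + real (card (V - T)) * d w"
    by (simp add: lp_cost_def sum.distrib)
  finally show ?thesis .
qed

lemma LP_fix0_le_shift:
  assumes G: "simple_graph V E" and d: "lp_feasible V E T d" and w: "w \<in> V - T"
    and one_terminal: "\<forall>s \<in> T. \<forall>t \<in> T. E w s \<and> E w t \<longrightarrow> s = t"
  shows "LP_fix0 V E T w \<le> ereal (lp_cost V T d + real (card (V - T)) * d w)"
proof -
  have "LP_fix0 V E T w \<le> ereal (lp_cost V T (shift_weight E w d))"
    using LP_fix0_le_cost[OF shift_weight_feasible[OF G d w one_terminal]]
    by (simp add: shift_weight_def)
  also have "\<dots> \<le> ereal (lp_cost V T d + real (card (V - T)) * d w)"
    using shift_weight_cost[of V w T d E] G w d by (simp add: simple_graph_def lp_feasible_def)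
  finally show ?thesis .
qed

section \<open>Paths through three neighbours of terminals\<close>

definition terminal_nbrs :: "'a set \<Rightarrow> ('a \<Rightarrow> 'a \<Rightarrow> bool) \<Rightarrow> 'a set \<Rightarrow> 'a set" where
  "terminal_nbrs V E T = {w \<in> V - T. \<exists>t \<in> T. E t w}"

text \<open>A terminal path through three vertices of \<open>N\<close> can be short-cut, via a terminal
  adjacent to its middle \<open>N\<close>-vertex, into a terminal path avoiding another \<open>N\<close>-vertex.\<close>
lemma detour:
  assumes G: "simple_graph V E" and P: "P \<in> terminal_paths V E T"
    and three: "card (set P \<inter> terminal_nbrs V E T) \<ge> 3"
  shows "\<exists>r \<in> set P \<inter> terminal_nbrs V E T. \<exists>Q \<in> terminal_paths V E T. set Q - T \<subseteq> set P - {r}"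
proof -
  let ?N = "terminal_nbrs V E T"
  have symE: "\<And>u v. E u v \<Longrightarrow> E v u" and EV: "\<And>u v. E u v \<Longrightarrow> u \<in> V \<and> v \<in> V"
    using G by (auto simp: simple_graph_def)
  have tp: "distinct P" "set P \<subseteq> V" "successively E P" "hd P \<in> T" "last P \<in> T" "hd P \<noteq> last P"
    using P by (auto simp: mem_terminal_paths)
  obtain as x bs y z where P_eq: "P = as @ x # bs" and x: "x \<in> ?N"
    and y: "y \<in> set as" "y \<in> ?N" and z: "z \<in> set bs" "z \<in> ?N"
    using middle_element[OF three] by blast
  obtain u where u: "u \<in> T" "E u x" using x unfolding terminal_nbrs_def by auto
  have ne: "as \<noteq> []" "bs \<noteq> []" using y z by auto
  show ?thesis
  proof (cases "u = hd P")
    case False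
    let ?W = "as @ [x, u]"
    have "successively E ?W" using tp(3) u symE ne unfolding P_eq
      by (auto simp: successively_append_iff successively_Cons)
    then obtain Q where "Q \<in> terminal_paths V E T" "set Q \<subseteq> set ?W"
      using walk_terminal_path[of E ?W V T] tp u ne False EV unfolding P_eq by auto
    moreover have "z \<notin> set as" "z \<noteq> x" using tp(1) z unfolding P_eq by auto
    ultimately show ?thesis using z u unfolding P_eq by (intro bexI[of _ z]) auto
  next
    case True
    let ?W = "u # x # bs"
    have "successively E ?W" using tp(3) u symE ne unfolding P_eq
      by (auto simp: successively_append_iff successively_Cons)
    then obtain Q where "Q \<in> terminal_paths V E T" "set Q \<subseteq> set ?W"
      using walk_terminal_path[of E ?W V T] tp u ne True EV unfolding P_eq by auto
    moreover have "y \<notin> set bs" "y \<noteq> x" using tp(1) y unfolding P_eq by auto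
    ultimately show ?thesis using y u unfolding P_eq by (intro bexI[of _ y]) auto
  qed
qed

lemma path_weight_three_nbrs:
  assumes G: "simple_graph V E" and d: "lp_feasible V E T d" and P: "P \<in> terminal_paths V E T"
    and three: "card (set P \<inter> terminal_nbrs V E T) \<ge> 3"
    and large: "\<forall>w \<in> terminal_nbrs V E T. \<eta> \<le> d w"
  shows "1 + \<eta> \<le> (\<Sum>v \<in> set P - T. d v)"
proof -
  obtain r Q where r: "r \<in> set P \<inter> terminal_nbrs V E T"
    and Q: "Q \<in> terminal_paths V E T" "set Q - T \<subseteq> set P - {r}"
    using detour[OF G P three] by blast
  have dpos: "\<And>v. v \<in> V - T \<Longrightarrow> 0 \<le> d v" using d by (auto simp: lp_feasible_def)
  have PV: "set P \<subseteq> V" using P by (auto simp: mem_terminal_paths)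
  have rT: "r \<notin> T" using r by (auto simp: terminal_nbrs_def)
  have "1 \<le> (\<Sum>v \<in> set Q - T. d v)" using d Q(1) by (auto simp: lp_feasible_def)
  also have "\<dots> \<le> (\<Sum>v \<in> set P - T - {r}. d v)"
    by (rule sum_mono2) (use Q PV dpos in auto)
  also have "\<dots> + d r = (\<Sum>v \<in> set P - T. d v)"
    using r rT by (simp add: sum.remove[of "set P - T" r])
  finally show ?thesis using large r by auto
qed

section \<open>Lowering a solution on the neighbours of terminals\<close>

definition lowered :: "'a set \<Rightarrow> real \<Rightarrow> ('a \<Rightarrow> real) \<Rightarrow> 'a \<Rightarrow> real" where
  "lowered N \<epsilon> d = (\<lambda>v. (d v - (if v \<in> N then \<epsilon> else 0)) / (1 - 2 * \<epsilon>))"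

lemma sum_lowered:
  "finite A \<Longrightarrow> (\<Sum>v \<in> A. lowered N \<epsilon> d v) = ((\<Sum>v \<in> A. d v) - \<epsilon> * card (A \<inter> N)) / (1 - 2 * \<epsilon>)"
  unfolding lowered_def
  by (simp add: sum_divide_distrib[symmetric] sum_subtractf sum.If_cases Int_def)

text \<open>Subtracting \<open>\<epsilon>\<close> on \<open>N\<close> and rescaling stays feasible, provided paths through at most
  two vertices of \<open>N\<close> lose at most \<open>2\<epsilon>\<close> and the others have enough slack.\<close>
lemma lowered_feasible:
  assumes d: "lp_feasible V E T d" and N: "N \<subseteq> V - T" "finite N"
    and \<epsilon>: "0 < \<epsilon>" "2 * \<epsilon> < 1" and large: "\<forall>w \<in> N. \<epsilon> \<le> d w"
    and slack: "\<forall>P \<in> terminal_paths V E T. card (set P \<inter> N) \<ge> 3 \<longrightarrow>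
                  1 + \<epsilon> * card N \<le> (\<Sum>v \<in> set P - T. d v)"
  shows "lp_feasible V E T (lowered N \<epsilon> d)"
  unfolding lp_feasible_def
proof (intro conjI ballI)
  show "0 \<le> lowered N \<epsilon> d v" if "v \<in> V - T" for v
    using d that large \<epsilon> by (auto simp: lp_feasible_def lowered_def)
  fix P assume P: "P \<in> terminal_paths V E T"
  have dP: "1 \<le> (\<Sum>v \<in> set P - T. d v)" using d P by (auto simp: lp_feasible_def)
  have cardP: "(set P - T) \<inter> N = set P \<inter> N" using N by blast
  have "1 - 2 * \<epsilon> \<le> (\<Sum>v \<in> set P - T. d v) - \<epsilon> * card (set P \<inter> N)"
  proof (cases "card (set P \<inter> N) \<ge> 3")
    case True
    have "card (set P \<inter> N) \<le> card N" using N by (intro card_mono) auto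
    then have "\<epsilon> * card (set P \<inter> N) \<le> \<epsilon> * card N" using \<epsilon> by simp
    moreover have "1 + \<epsilon> * card N \<le> (\<Sum>v \<in> set P - T. d v)" using slack P True by blast
    ultimately show ?thesis using \<epsilon> by linarith
  next
    case False
    then have "\<epsilon> * card (set P \<inter> N) \<le> \<epsilon> * 2" using \<epsilon> by (intro mult_left_mono) auto
    then show ?thesis using dP by linarith
  qed
  then show "1 \<le> (\<Sum>v \<in> set P - T. lowered N \<epsilon> d v)"
    using \<epsilon> by (simp add: sum_lowered cardP)
qed

lemma lowered_cost:
  assumes "finite V" "N \<subseteq> V - T"
  shows "lp_cost V T (lowered N \<epsilon> d) = (lp_cost V T d - \<epsilon> * card N) / (1 - 2 * \<epsilon>)"
proof -
  have "(V - T) \<inter> N = N" using assms by auto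
  then show ?thesis using assms by (simp add: lp_cost_def sum_lowered)
qed

section \<open>Counting the neighbours of terminals\<close>

lemma card_terminal_nbrs_le_LP:
  assumes G: "simple_graph V E"
    and R2: "\<forall>w \<in> V - T. \<forall>s \<in> T. \<forall>t \<in> T. E w s \<and> E w t \<longrightarrow> s = t"
    and R3: "\<forall>w \<in> terminal_nbrs V E T. LP V E T < LP_fix0 V E T w"
    and L: "LP V E T = ereal L"
  shows "real (card (terminal_nbrs V E T)) \<le> 2 * L"
proof (rule ccontr)
  define N where "N = terminal_nbrs V E T"
  define n where "n = card (V - T)"
  assume "\<not> real (card (terminal_nbrs V E T)) \<le> 2 * L"
  then have excess: "2 * L < card N" unfolding N_def by simp
  have finV: "finite V" using G by (simp add: simple_graph_def)
  have NV: "N \<subseteq> V - T" and finN: "finite N"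
    using finV unfolding N_def terminal_nbrs_def by (auto intro: finite_subset)
  have "N \<noteq> {}" using excess LP_nonneg[of V E T] L by auto
  then have n0: "n > 0" unfolding n_def using NV finV by (metis card_gt_0_iff finite_Diff subset_empty)
  have "\<forall>w \<in> N. ereal L < LP_fix0 V E T w" using R3 L unfolding N_def by simp
  then obtain \<delta> where \<delta>: "0 < \<delta>" "\<delta> \<le> 1" and gap: "\<forall>w \<in> N. ereal (L + \<delta>) \<le> LP_fix0 V E T w"
    using uniform_gap[OF finN] by blast
  define \<eta> where "\<eta> = \<delta> / (2 * n)"
  define \<epsilon> where "\<epsilon> = \<eta> / (card N + 2)"
  define \<gamma> where "\<gamma> = min (\<delta> / 2) (\<epsilon> * (card N - 2 * L))"
  have \<eta>: "0 < \<eta>" "\<eta> \<le> 1 / 2" using \<delta> n0 by (auto simp: \<eta>_def field_simps)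
  have \<epsilon>: "0 < \<epsilon>" "2 * \<epsilon> < 1" "\<epsilon> \<le> \<eta>" "\<epsilon> * card N \<le> \<eta>"
    using \<eta> by (auto simp: \<epsilon>_def field_simps)
  have "0 < \<gamma>" using \<delta> \<epsilon> excess by (simp add: \<gamma>_def)
  then obtain d where d: "lp_feasible V E T d" and cost: "lp_cost V T d < L + \<gamma>"
    using LP_near_optimal[of V E T "L + \<gamma>"] L by auto
  have large: "\<forall>w \<in> N. \<eta> \<le> d w"
  proof
    fix w assume w: "w \<in> N"
    have "ereal (L + \<delta>) \<le> ereal (lp_cost V T d + n * d w)"
      using gap w LP_fix0_le_shift[OF G d, of w] NV R2 unfolding n_def by (blast intro: order_trans)
    then have "\<delta> / 2 \<le> n * d w" using cost by (simp add: \<gamma>_def)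
    then show "\<eta> \<le> d w" using n0 by (simp add: \<eta>_def field_simps)
  qed
  have "lp_feasible V E T (lowered N \<epsilon> d)"
  proof (rule lowered_feasible[OF d NV finN \<epsilon>(1,2)])
    show "\<forall>w \<in> N. \<epsilon> \<le> d w" using large \<epsilon> by force
    show "\<forall>P \<in> terminal_paths V E T. 3 \<le> card (set P \<inter> N) \<longrightarrow>
            1 + \<epsilon> * card N \<le> (\<Sum>v \<in> set P - T. d v)"
      using path_weight_three_nbrs[OF G d] large \<epsilon>(4) unfolding N_def by fastforce
  qed
  then have "L \<le> (lp_cost V T d - \<epsilon> * card N) / (1 - 2 * \<epsilon>)"
    using LP_le_cost L lowered_cost[OF finV NV] by fastforce
  then have "\<epsilon> * card N \<le> lp_cost V T d - L + 2 * \<epsilon> * L" using \<epsilon> by (simp add: field_simps)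
  then show False using cost \<epsilon> by (simp add: \<gamma>_def algebra_simps)
qed

text \<open>By (R1), (R2), (R5) distinct terminals have distinct non-terminal neighbours.\<close>
lemma card_terminals_le_nbrs:
  assumes G: "simple_graph V E" and TV: "T \<subseteq> V"
    and R1a: "\<forall>s \<in> T. \<forall>t \<in> T. \<not> E s t"
    and R2: "\<forall>w \<in> V - T. \<forall>s \<in> T. \<forall>t \<in> T. E w s \<and> E w t \<longrightarrow> s = t"
    and R5: "\<forall>v \<in> V. card {t \<in> T. E\<^sup>*\<^sup>* v t} \<ge> 2"
  shows "card T \<le> card (terminal_nbrs V E T)"
proof -
  let ?N = "terminal_nbrs V E T"
  have symE: "\<And>u v. E u v \<Longrightarrow> E v u" and EV: "\<And>u v. E u v \<Longrightarrow> u \<in> V \<and> v \<in> V"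
    and finV: "finite V" using G by (auto simp: simple_graph_def)
  have "\<exists>w. w \<in> ?N \<and> E t w" if t: "t \<in> T" for t
  proof -
    have "\<not> {t' \<in> T. E\<^sup>*\<^sup>* t t'} \<subseteq> {t}"
      using R5 t TV card_mono[of "{t}" "{t' \<in> T. E\<^sup>*\<^sup>* t t'}"] by fastforce
    then obtain t' where "E\<^sup>*\<^sup>* t t'" "t' \<noteq> t" by blast
    then obtain w where "E t w" by (metis converse_rtranclpE)
    then show ?thesis using EV R1a t unfolding terminal_nbrs_def by blast
  qed
  then obtain f where f: "\<And>t. t \<in> T \<Longrightarrow> f t \<in> ?N \<and> E t (f t)" by metis
  have "inj_on f T"
  proof (rule inj_onI)
    fix s t assume st: "s \<in> T" "t \<in> T" "f s = f t"
    then have "f s \<in> V - T" "E (f s) s" "E (f s) t"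
      using f[OF st(1)] f[OF st(2)] symE unfolding terminal_nbrs_def by auto
    then show "s = t" using R2 st by blast
  qed
  moreover have "finite ?N" using finV unfolding terminal_nbrs_def by simp
  ultimately show ?thesis using f by (intro card_inj_on_le) auto
qed

theorem mainTheorem7:
  fixes V T :: "'a set" and E :: "'a \<Rightarrow> 'a \<Rightarrow> bool" and k :: int
  assumes G: "simple_graph V E"
    and TV: "T \<subseteq> V"
    and R1a: "\<forall>s \<in> T. \<forall>t \<in> T. \<not> E s t"
    and R1b: "ereal (real_of_int k) - LP V E T \<ge> 0"
    and R2: "\<forall>w \<in> V - T. \<forall>s \<in> T. \<forall>t \<in> T. E w s \<and> E w t \<longrightarrow> s = t"
    and R3: "\<forall>t \<in> T. \<forall>w \<in> V - T. E t w \<longrightarrow> LP_fix0 V E T w > LP V E T"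
    and R5: "\<forall>v \<in> V. card {t \<in> T. E\<^sup>*\<^sup>* v t} \<ge> 2"
  shows "int (card T) \<le> 2 * k"
proof -
  obtain L where L: "LP V E T = ereal L" and Lk: "L \<le> real_of_int k"
    using R1b LP_nonneg[of V E T] by (cases "LP V E T") auto
  have "real (card T) \<le> real (card (terminal_nbrs V E T))"
    using card_terminals_le_nbrs[OF G TV R1a R2 R5] by simp
  also have "\<dots> \<le> 2 * L"
    using card_terminal_nbrs_le_LP[OF G R2 _ L] R3 by (auto simp: terminal_nbrs_def)
  finally show ?thesis using Lk by linarith
qed

end
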